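(* Let $\mathcal{G}=(\mathcal{V},\mathcal{A})$ be a finite directed graph with vertex weights $\{q_i\}_{i\in\mathcal{V}}$. Apply the following pruning procedure: for each leaf SCC of $\mathcal{G}$, with vertex set $\mathcal{V}_S$, select a vertex $i\in\arg\min_{a\in\mathcal{V}_S} q_a$ (arbitrarily among minimizers) and remove all outgoing arcs of $i$. Let $\mathcal{G}^{\mathrm{p}}=(\mathcal{V}^{\mathrm{p}},\mathcal{A}^{\mathrm{p}})$ be the resulting graph. Then $\mathcal{V}^{\mathrm{p}}=\mathcal{V}$, $\mathcal{A}^{\mathrm{p}}\subseteq\mathcal{A}$, and \[ \sum_{i:\ i \text{ is a predecessor of some vertex in } \mathcal{L}(\mathcal{G}^{\mathrm{p}})} q_i = \sum_{k\in\mathcal{V}} q_k - \sum_{i\in\mathcal{L}(\mathcal{G})} q_i - \sum_{\mathcal{V}_S\in\mathbb{V}} \min_{a\in\mathcal{V}_S} q_a, \] where $\mathbb{V}$ is the set of vertex sets of all leaf SCCs of $\mathcal{G}$.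
   Context: A leaf vertex is a vertex with no outgoing arcs; $\mathcal{L}(\mathcal{H})$ denotes the set of leaf vertices of a directed graph $\mathcal{H}$. A vertex $j$ is a predecessor of vertex $i$ iff there is a directed path from $j$ to $i$. A strongly connected component (SCC) is a maximal subgraph in which every ordered pair of vertices is joined by a directed path inside the subgraph. A leaf SCC is an SCC with at least two vertices from which no arc goes to a vertex outside the SCC. *)

theory Defs
  imports Complex_Main
begin

definition leaves :: "'a set \<Rightarrow> ('a \<times> 'a) set \<Rightarrow> 'a set" where
  "leaves V A = {i \<in> V. \<not> (\<exists>j. (i, j) \<in> A)}"

definition is_pred :: "('a \<times> 'a) set \<Rightarrow> 'a \<Rightarrow> 'a \<Rightarrow> bool" where
  "is_pred A j i \<longleftrightarrow> (j, i) \<in> A\<^sup>+"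

definition strongly_connected :: "('a \<times> 'a) set \<Rightarrow> 'a set \<Rightarrow> bool" where
  "strongly_connected A S \<longleftrightarrow> (\<forall>x\<in>S. \<forall>y\<in>S. (x, y) \<in> (A \<inter> (S \<times> S))\<^sup>*)"

definition is_scc :: "'a set \<Rightarrow> ('a \<times> 'a) set \<Rightarrow> 'a set \<Rightarrow> bool" where
  "is_scc V A S \<longleftrightarrow> S \<subseteq> V \<and> S \<noteq> {} \<and> strongly_connected A S \<and>
     (\<forall>T. S \<subseteq> T \<and> T \<subseteq> V \<and> strongly_connected A T \<longrightarrow> T = S)"

definition is_leaf_scc :: "'a set \<Rightarrow> ('a \<times> 'a) set \<Rightarrow> 'a set \<Rightarrow> bool" where
  "is_leaf_scc V A S \<longleftrightarrow> is_scc V A S \<and> card S \<ge> 2 \<and>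
     (\<forall>x y. (x, y) \<in> A \<and> x \<in> S \<longrightarrow> y \<in> S)"

definition prune :: "'a set \<Rightarrow> ('a \<times> 'a) set \<Rightarrow> ('a set \<Rightarrow> 'a) \<Rightarrow> 'a set \<times> ('a \<times> 'a) set" where
  "prune V A sel = (V, A - {(i, j). \<exists>S. is_leaf_scc V A S \<and> i = sel S})"

end

theory Submission
  imports Defs
begin

text \<open>Pruning removes exactly the out-arcs of the selected vertices, so the leaves of the
  pruned graph are the old leaves together with one selected vertex per leaf SCC; these are
  pairwise distinct because leaf SCCs are closed under arcs, hence disjoint, and contain no old
  leaf. Every other vertex is a predecessor of a new leaf: it reaches a vertex w that is reached
  back from everything w reaches. If w is not a leaf, no vertex reachable from w is a leaf, so
  none of their arcs was removed; the reachable set is then strongly connected and closed in the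
  original graph, and loop-freeness gives it two vertices, so it is a leaf SCC and would contain
  a selected vertex without out-arcs. Summing the weights over the complement of the new leaves
  gives the identity.\<close>

lemma rtrancl_restrict_reachable:
  assumes "(x, y) \<in> r\<^sup>*"
  shows "(x, y) \<in> (r \<inter> (r\<^sup>* `` {x} \<times> r\<^sup>* `` {x}))\<^sup>*"
  using assms
proof (induction rule: rtrancl_induct)
  case base
  then show ?case by simp
next
  case (step y z)
  then have "(y, z) \<in> r \<inter> (r\<^sup>* `` {x} \<times> r\<^sup>* `` {x})" by auto
  with step.IH show ?case by (rule rtrancl_into_rtrancl)
qed

text \<open>A vertex minimising the number of vertices it reaches is reached back from all of them.\<close>
lemma obtain_terminal_reachable:
  assumes "finite (r\<^sup>* `` {x})"
  obtains w where "(x, w) \<in> r\<^sup>*" and "\<And>u. (w, u) \<in> r\<^sup>* \<Longrightarrow> (u, w) \<in> r\<^sup>*"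
proof -
  obtain w where w: "(x, w) \<in> r\<^sup>*"
    and least: "\<And>u. (x, u) \<in> r\<^sup>* \<Longrightarrow> card (r\<^sup>* `` {w}) \<le> card (r\<^sup>* `` {u})"
    using ex_has_least_nat[of "\<lambda>u. (x, u) \<in> r\<^sup>*" x "\<lambda>u. card (r\<^sup>* `` {u})"] by auto
  have "(u, w) \<in> r\<^sup>*" if u: "(w, u) \<in> r\<^sup>*" for u
  proof -
    have sub: "r\<^sup>* `` {u} \<subseteq> r\<^sup>* `` {w}"
      using u by (auto intro: rtrancl_trans)
    have "r\<^sup>* `` {w} \<subseteq> r\<^sup>* `` {x}"
      using w by (auto intro: rtrancl_trans)
    then have "finite (r\<^sup>* `` {w})"
      using assms by (rule finite_subset)
    moreover have "card (r\<^sup>* `` {w}) \<le> card (r\<^sup>* `` {u})"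
      using least w u by (blast intro: rtrancl_trans)
    ultimately have "r\<^sup>* `` {u} = r\<^sup>* `` {w}"
      using sub by (simp add: card_seteq)
    then show ?thesis by blast
  qed
  with w that show ?thesis by blast
qed

lemma strongly_connected_mono:
  "strongly_connected r S \<Longrightarrow> r \<subseteq> s \<Longrightarrow> strongly_connected s S"
  unfolding strongly_connected_def by (meson Int_mono order_refl rtrancl_mono subsetD)

lemma strongly_connected_terminal_reachable:
  assumes "\<And>u. (w, u) \<in> r\<^sup>* \<Longrightarrow> (u, w) \<in> r\<^sup>*"
  shows "strongly_connected r (r\<^sup>* `` {w})"
  unfolding strongly_connected_def
proof (intro ballI)
  fix x y assume x: "x \<in> r\<^sup>* `` {w}" and y: "y \<in> r\<^sup>* `` {w}"
  have "r\<^sup>* `` {x} = r\<^sup>* `` {w}"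
    using x assms by (blast intro: rtrancl_trans)
  moreover have "(x, y) \<in> r\<^sup>*"
    using x y assms by (blast intro: rtrancl_trans)
  ultimately show "(x, y) \<in> (r \<inter> (r\<^sup>* `` {w} \<times> r\<^sup>* `` {w}))\<^sup>*"
    using rtrancl_restrict_reachable by metis
qed

lemma strongly_connected_subset_closed:
  assumes "strongly_connected r S" and "x \<in> S" and "x \<in> T" and "r `` T \<subseteq> T"
  shows "S \<subseteq> T"
proof
  fix y assume "y \<in> S"
  then have "(x, y) \<in> r\<^sup>*"
    using assms(1,2) unfolding strongly_connected_def by (meson Int_lower1 rtrancl_mono subsetD)
  then show "y \<in> T"
    using Image_closed_trancl[OF assms(4)] assms(3) by blast
qed

lemma leaf_scc_Image_subset: "is_leaf_scc V A S \<Longrightarrow> A `` S \<subseteq> S"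
  unfolding is_leaf_scc_def by blast

lemma leaf_scc_subset: "is_leaf_scc V A S \<Longrightarrow> S \<subseteq> V"
  unfolding is_leaf_scc_def is_scc_def by blast

lemma leaf_scc_strongly_connected: "is_leaf_scc V A S \<Longrightarrow> strongly_connected A S"
  unfolding is_leaf_scc_def is_scc_def by blast

lemma is_leaf_sccI:
  assumes "C \<subseteq> V" and "card C \<ge> 2" and "strongly_connected A C" and "A `` C \<subseteq> C"
  shows "is_leaf_scc V A C"
proof -
  have "C \<noteq> {}" using assms(2) by auto
  then obtain w where w: "w \<in> C" by blast
  have "T = C" if "C \<subseteq> T" "strongly_connected A T" for T
    using strongly_connected_subset_closed[OF that(2) _ w assms(4)] w that(1) by blast
  with assms \<open>C \<noteq> {}\<close> show ?thesis
    unfolding is_leaf_scc_def is_scc_def by blast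
qed

lemma leaf_scc_unique:
  assumes "is_leaf_scc V A S" and "is_leaf_scc V A T" and "x \<in> S" and "x \<in> T"
  shows "S = T"
proof (rule subset_antisym)
  show "S \<subseteq> T"
    using leaf_scc_strongly_connected[OF assms(1)] assms(3,4) leaf_scc_Image_subset[OF assms(2)]
    by (rule strongly_connected_subset_closed)
  show "T \<subseteq> S"
    using leaf_scc_strongly_connected[OF assms(2)] assms(4,3) leaf_scc_Image_subset[OF assms(1)]
    by (rule strongly_connected_subset_closed)
qed

lemma leaf_scc_disjoint_leaves:
  assumes "is_leaf_scc V A S"
  shows "S \<inter> leaves V A = {}"
proof -
  have "x \<notin> leaves V A" if x: "x \<in> S" for x
  proof -
    have "card S \<ge> 2" using assms unfolding is_leaf_scc_def by blast
    then have "finite S" and "\<not> S \<subseteq> {x}"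
      using card_mono[of "{x}" S] by (auto intro: card_ge_0_finite)
    then obtain y where y: "y \<in> S" "y \<noteq> x" by blast
    have "(x, y) \<in> (A \<inter> S \<times> S)\<^sup>*"
      using leaf_scc_strongly_connected[OF assms] x y(1) unfolding strongly_connected_def by blast
    then obtain z where "(x, z) \<in> A \<inter> S \<times> S"
      using y(2) by (cases rule: converse_rtranclE) auto
    then show ?thesis unfolding leaves_def by blast
  qed
  then show ?thesis by blast
qed

lemma non_leaf_is_pred_of_leaf:
  assumes "finite V" and "A \<subseteq> V \<times> V" and "\<forall>x. (x, x) \<notin> A" and "A' \<subseteq> A"
    and removed: "\<And>a b. (a, b) \<in> A \<Longrightarrow> (a, b) \<notin> A' \<Longrightarrow> a \<in> leaves V A'"
    and leaf_in_scc: "\<And>S. is_leaf_scc V A S \<Longrightarrow> S \<inter> leaves V A' \<noteq> {}"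
    and i: "i \<in> V" "i \<notin> leaves V A'"
  shows "\<exists>l \<in> leaves V A'. is_pred A' i l"
proof -
  have A'_closed: "A' `` V \<subseteq> V" using assms(2,4) by blast
  have reach_i: "A'\<^sup>* `` {i} \<subseteq> V"
    using Image_closed_trancl[OF A'_closed] i(1) by blast
  obtain w where iw: "(i, w) \<in> A'\<^sup>*"
    and returns: "\<And>u. (w, u) \<in> A'\<^sup>* \<Longrightarrow> (u, w) \<in> A'\<^sup>*"
    using obtain_terminal_reachable[OF finite_subset[OF reach_i assms(1)]] by blast
  define C where "C = A'\<^sup>* `` {w}"
  have CV: "C \<subseteq> V"
    unfolding C_def using reach_i iw by (blast intro: rtrancl_trans)
  show ?thesis
  proof (cases "w \<in> leaves V A'")
    case True
    then have "i \<noteq> w" using i(2) by blast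
    with iw have "(i, w) \<in> A'\<^sup>+" by (simp add: rtrancl_eq_or_trancl)
    with True show ?thesis unfolding is_pred_def by blast
  next
    case False
    have C_no_leaf: "C \<inter> leaves V A' = {}"
    proof -
      have "c \<notin> leaves V A'" if "c \<in> C" for c
      proof (cases "c = w")
        case True
        with \<open>w \<notin> leaves V A'\<close> show ?thesis by blast
      next
        case False
        moreover have "(c, w) \<in> A'\<^sup>*" using returns that unfolding C_def by blast
        ultimately have "(c, w) \<in> A'\<^sup>+" by (simp add: rtrancl_eq_or_trancl)
        then obtain z where "(c, z) \<in> A'" by (blast dest: tranclD)
        then show ?thesis unfolding leaves_def by blast
      qed
      then show ?thesis by blast
    qed
    have closed: "A `` C \<subseteq> C"
    proof
      fix b assume "b \<in> A `` C"
      then obtain a where "a \<in> C" "(a, b) \<in> A" by blast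
      moreover have "a \<notin> leaves V A'" using \<open>a \<in> C\<close> C_no_leaf by blast
      ultimately have "(a, b) \<in> A'" using removed by blast
      with \<open>a \<in> C\<close> show "b \<in> C" unfolding C_def by (blast intro: rtrancl_into_rtrancl)
    qed
    have connected: "strongly_connected A C"
      unfolding C_def using strongly_connected_terminal_reachable[OF returns] assms(4)
      by (rule strongly_connected_mono)
    have card: "card C \<ge> 2"
    proof -
      have "w \<in> V" using CV unfolding C_def by blast
      with False obtain z where z: "(w, z) \<in> A'" unfolding leaves_def by blast
      then have "z \<noteq> w" using assms(3,4) by blast
      moreover have "{w, z} \<subseteq> C" using z unfolding C_def by blast
      moreover have "card {w, z} \<le> card C"
        using finite_subset[OF CV assms(1)] \<open>{w, z} \<subseteq> C\<close> by (rule card_mono)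
      ultimately show ?thesis by simp
    qed
    have "is_leaf_scc V A C" using CV card connected closed by (rule is_leaf_sccI)
    from leaf_in_scc[OF this] C_no_leaf show ?thesis by blast
  qed
qed

lemma pred_of_leaf_set_eq:
  assumes "\<And>i. i \<in> V \<Longrightarrow> i \<notin> leaves V A \<Longrightarrow> \<exists>l \<in> leaves V A. is_pred A i l"
  shows "{i \<in> V. \<exists>l \<in> leaves V A. is_pred A i l} = V - leaves V A"
  using assms unfolding is_pred_def leaves_def by (blast dest: tranclD)

definition pruned_arcs :: "'a set \<Rightarrow> ('a \<times> 'a) set \<Rightarrow> ('a set \<Rightarrow> 'a) \<Rightarrow> ('a \<times> 'a) set" where
  "pruned_arcs V A sel = A - {(i, j). \<exists>S. is_leaf_scc V A S \<and> i = sel S}"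

lemma prune_eq: "prune V A sel = (V, pruned_arcs V A sel)"
  unfolding prune_def pruned_arcs_def ..

lemma pruned_arcs_subset: "pruned_arcs V A sel \<subseteq> A"
  unfolding pruned_arcs_def by blast

lemma leaves_pruned_arcs:
  assumes "A \<subseteq> V \<times> V" and "\<And>S. is_leaf_scc V A S \<Longrightarrow> sel S \<in> S"
  shows "leaves V (pruned_arcs V A sel) = leaves V A \<union> sel ` {S. is_leaf_scc V A S}"
  using assms leaf_scc_subset unfolding leaves_def pruned_arcs_def by blast

lemma pruned_arcs_removed_from_leaf:
  assumes "A \<subseteq> V \<times> V" and "(a, b) \<in> A" and "(a, b) \<notin> pruned_arcs V A sel"
  shows "a \<in> leaves V (pruned_arcs V A sel)"
  using assms unfolding leaves_def pruned_arcs_def by blast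

lemma sum_leaves_pruned_arcs:
  assumes "finite V" and "A \<subseteq> V \<times> V" and sel: "\<And>S. is_leaf_scc V A S \<Longrightarrow> sel S \<in> S"
  shows "(\<Sum>i\<in>leaves V (pruned_arcs V A sel). q i)
    = (\<Sum>i\<in>leaves V A. q i) + (\<Sum>S\<in>{S. is_leaf_scc V A S}. q (sel S))"
proof -
  let ?L = "{S. is_leaf_scc V A S}"
  have "?L \<subseteq> Pow V" using leaf_scc_subset by blast
  then have "finite ?L" using assms(1) by (simp add: finite_subset)
  moreover have "finite (leaves V A)"
    using assms(1) unfolding leaves_def by simp
  moreover have "leaves V A \<inter> sel ` ?L = {}"
    using sel leaf_scc_disjoint_leaves by blast
  moreover have "inj_on sel ?L"
  proof (rule inj_onI)
    fix S T assume "S \<in> ?L" "T \<in> ?L" "sel S = sel T"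
    with sel[of S] sel[of T] leaf_scc_unique[of V A S T "sel S"] show "S = T" by simp
  qed
  moreover have "leaves V (pruned_arcs V A sel) = leaves V A \<union> sel ` ?L"
    using assms(2) sel by (rule leaves_pruned_arcs)
  ultimately show ?thesis
    by (simp add: sum.union_disjoint sum.reindex)
qed

theorem lemma7:
  fixes V :: "'a set" and A :: "('a \<times> 'a) set" and q :: "'a \<Rightarrow> real"
    and sel :: "'a set \<Rightarrow> 'a" and Vp :: "'a set" and Ap :: "('a \<times> 'a) set"
  assumes "finite V"
    and "A \<subseteq> V \<times> V"
    and "\<forall>x. (x, x) \<notin> A"
    and "\<forall>S. is_leaf_scc V A S \<longrightarrow> sel S \<in> S \<and> q (sel S) = Min (q ` S)"
    and "(Vp, Ap) = prune V A sel"
  shows "Vp = V \<and> Ap \<subseteq> A \<and>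
    (\<Sum>i\<in>{i \<in> Vp. \<exists>l \<in> leaves Vp Ap. is_pred Ap i l}. q i)
      = (\<Sum>k\<in>V. q k) - (\<Sum>i\<in>leaves V A. q i)
        - (\<Sum>S\<in>{S. is_leaf_scc V A S}. Min (q ` S))"
proof -
  have Vp: "Vp = V" and Ap: "Ap = pruned_arcs V A sel"
    using assms(5) unfolding prune_eq by simp_all
  have sel_mem: "\<And>S. is_leaf_scc V A S \<Longrightarrow> sel S \<in> S" using assms(4) by blast
  have Ap_sub: "Ap \<subseteq> A" unfolding Ap by (rule pruned_arcs_subset)
  have removed: "\<And>a b. (a, b) \<in> A \<Longrightarrow> (a, b) \<notin> Ap \<Longrightarrow> a \<in> leaves V Ap"
    unfolding Ap using assms(2) by (rule pruned_arcs_removed_from_leaf)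
  have "leaves V Ap = leaves V A \<union> sel ` {S. is_leaf_scc V A S}"
    unfolding Ap using assms(2) sel_mem by (rule leaves_pruned_arcs)
  then have leaf_in_scc: "\<And>S. is_leaf_scc V A S \<Longrightarrow> S \<inter> leaves V Ap \<noteq> {}"
    using sel_mem by blast
  have "{i \<in> V. \<exists>l \<in> leaves V Ap. is_pred Ap i l} = V - leaves V Ap"
    by (rule pred_of_leaf_set_eq, rule non_leaf_is_pred_of_leaf[OF assms(1-3) Ap_sub removed leaf_in_scc])
  then have "(\<Sum>i\<in>{i \<in> Vp. \<exists>l \<in> leaves Vp Ap. is_pred Ap i l}. q i)
      = (\<Sum>k\<in>V. q k) - (\<Sum>i\<in>leaves V Ap. q i)"
    using Vp assms(1) by (simp add: sum_diff leaves_def)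
  also have "(\<Sum>i\<in>leaves V Ap. q i)
      = (\<Sum>i\<in>leaves V A. q i) + (\<Sum>S\<in>{S. is_leaf_scc V A S}. q (sel S))"
    unfolding Ap using assms(1,2) sel_mem by (rule sum_leaves_pruned_arcs)
  also have "(\<Sum>S\<in>{S. is_leaf_scc V A S}. q (sel S)) = (\<Sum>S\<in>{S. is_leaf_scc V A S}. Min (q ` S))"
    using assms(4) by simp
  finally show ?thesis using Vp Ap_sub by simp
qed

end
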